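(* Let $(E,P,\vartheta)$ be a complete bipolar metric space and let $F\colon E\cup P\to E\cup P$ be a contravariant mapping (i.e. $F(E)\subseteq P$ and $F(P)\subseteq E$) which is a polynomial contraction in the sense that there exist $\pi\in(0,1)$, an integer $\sigma\geq1$ and functions $q_\upsilon\colon E\times P\to[0,\infty)$, $\upsilon=0,\dots,\sigma$, such that $$\sum_{\upsilon=0}^{\sigma} q_\upsilon(Ff,Fe)\,\vartheta^\upsilon(Ff,Fe)\leq \pi\sum_{\upsilon=0}^{\sigma} q_\upsilon(e,f)\,\vartheta^\upsilon(e,f)\quad\text{for all } e\in E,\ f\in P.$$ Assume moreover that (i) $F$ is continuous, and (ii) there exist $\varrho\in\{1,\dots,\sigma\}$ and $Q_\varrho>0$ such that $q_\varrho(e,f)\geq Q_\varrho$ for all $e\in E$, $f\in P$. Then $F$ has a unique fixed point.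
   Context: A bipolar metric space is a triple $(E,P,\vartheta)$ where $E,P$ are nonempty sets and $\vartheta\colon E\times P\to[0,\infty)$ satisfies: (1) for $e\in E$, $f\in P$, $\vartheta(e,f)=0$ iff $e=f$; (2) $\vartheta(e,f)=\vartheta(f,e)$ whenever $e,f\in E\cap P$; (3) $\vartheta(e,f)\leq\vartheta(e,z)+\vartheta(r,z)+\vartheta(r,f)$ for all $e,r\in E$, $z,f\in P$. A sequence $(x_n)$ in $E$ converges to $y\in P$ if $\vartheta(x_n,y)\to0$; a sequence $(y_n)$ in $P$ converges to $x\in E$ if $\vartheta(x,y_n)\to 0$. A bisequence $(x_n,y_n)$ with $x_n\in E$, $y_n\in P$ is convergent if both sequences converge, and Cauchy if for every $\varepsilon>0$ there is $N$ with $\vartheta(x_n,y_m)<\varepsilon$ for all $n,m\geq N$; the space is complete if every Cauchy bisequence is convergent. $F$ is continuous if whenever a sequence $(u_n)$ (in $E$ or in $P$) converges to a point $v$, the sequence $(Fu_n)$ converges to $Fv$. $\vartheta^\upsilon$ denotes the $\upsilon$-th power of $\vartheta$, with $\vartheta^0\equiv1$. A fixed point of $F$ is a point $g$ with $Fg=g$. *)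

theory Defs
  imports Complex_Main
begin

definition bipolar_metric :: "'a set \<Rightarrow> 'a set \<Rightarrow> ('a \<Rightarrow> 'a \<Rightarrow> real) \<Rightarrow> bool" where
  "bipolar_metric E P d \<longleftrightarrow> E \<noteq> {} \<and> P \<noteq> {}
     \<and> (\<forall>e\<in>E. \<forall>f\<in>P. d e f \<ge> 0)
     \<and> (\<forall>e\<in>E. \<forall>f\<in>P. d e f = 0 \<longleftrightarrow> e = f)
     \<and> (\<forall>e\<in>E \<inter> P. \<forall>f\<in>E \<inter> P. d e f = d f e)
     \<and> (\<forall>e\<in>E. \<forall>r\<in>E. \<forall>z\<in>P. \<forall>f\<in>P. d e f \<le> d e z + d r z + d r f)"

definition conv_EP :: "'a set \<Rightarrow> 'a set \<Rightarrow> ('a \<Rightarrow> 'a \<Rightarrow> real) \<Rightarrow> (nat \<Rightarrow> 'a) \<Rightarrow> 'a \<Rightarrow> bool" where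
  "conv_EP E P d x y \<longleftrightarrow> (\<forall>n. x n \<in> E) \<and> y \<in> P \<and> (\<lambda>n. d (x n) y) \<longlonglongrightarrow> 0"

definition conv_PE :: "'a set \<Rightarrow> 'a set \<Rightarrow> ('a \<Rightarrow> 'a \<Rightarrow> real) \<Rightarrow> (nat \<Rightarrow> 'a) \<Rightarrow> 'a \<Rightarrow> bool" where
  "conv_PE E P d y x \<longleftrightarrow> (\<forall>n. y n \<in> P) \<and> x \<in> E \<and> (\<lambda>n. d x (y n)) \<longlonglongrightarrow> 0"

definition cauchy_biseq :: "'a set \<Rightarrow> 'a set \<Rightarrow> ('a \<Rightarrow> 'a \<Rightarrow> real) \<Rightarrow> (nat \<Rightarrow> 'a) \<Rightarrow> (nat \<Rightarrow> 'a) \<Rightarrow> bool" where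
  "cauchy_biseq E P d x y \<longleftrightarrow> (\<forall>n. x n \<in> E \<and> y n \<in> P) \<and>
     (\<forall>\<epsilon>>0. \<exists>N. \<forall>n\<ge>N. \<forall>m\<ge>N. d (x n) (y m) < \<epsilon>)"

definition convergent_biseq :: "'a set \<Rightarrow> 'a set \<Rightarrow> ('a \<Rightarrow> 'a \<Rightarrow> real) \<Rightarrow> (nat \<Rightarrow> 'a) \<Rightarrow> (nat \<Rightarrow> 'a) \<Rightarrow> bool" where
  "convergent_biseq E P d x y \<longleftrightarrow> (\<exists>a. conv_EP E P d x a) \<and> (\<exists>b. conv_PE E P d y b)"

definition complete_bipolar :: "'a set \<Rightarrow> 'a set \<Rightarrow> ('a \<Rightarrow> 'a \<Rightarrow> real) \<Rightarrow> bool" where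
  "complete_bipolar E P d \<longleftrightarrow> bipolar_metric E P d \<and>
     (\<forall>x y. cauchy_biseq E P d x y \<longrightarrow> convergent_biseq E P d x y)"

definition contravariant :: "'a set \<Rightarrow> 'a set \<Rightarrow> ('a \<Rightarrow> 'a) \<Rightarrow> bool" where
  "contravariant E P F \<longleftrightarrow> F ` E \<subseteq> P \<and> F ` P \<subseteq> E"

definition bp_continuous :: "'a set \<Rightarrow> 'a set \<Rightarrow> ('a \<Rightarrow> 'a \<Rightarrow> real) \<Rightarrow> ('a \<Rightarrow> 'a) \<Rightarrow> bool" where
  "bp_continuous E P d F \<longleftrightarrow>
     (\<forall>u v. conv_EP E P d u v \<longrightarrow> conv_PE E P d (\<lambda>n. F (u n)) (F v)) \<and>
     (\<forall>u v. conv_PE E P d u v \<longrightarrow> conv_EP E P d (\<lambda>n. F (u n)) (F v))"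

end

theory Submission
  imports Defs
begin

(* Write S(e,f) = sum_u q_u(e,f) d(e,f)^u. It shrinks by the factor pi under every
   application of F and dominates Q d(e,f)^rho. Along the orbit x_n = F^(2n) x_0, y_n = F x_n
   the distances d(x_n,y_n) and d(x_(n+1),y_n) therefore decay geometrically with ratio
   pi^(1/rho), and the quadrilateral inequality telescopes them into a Cauchy estimate.
   Continuity makes the limit a fixed point; for two fixed points g, h contractivity gives
   S(g,h) <= pi^2 S(g,h), so S(g,h) = 0 and hence d(g,h) = 0. *)

lemma bipolar_metric_nonneg: "bipolar_metric E P d \<Longrightarrow> e \<in> E \<Longrightarrow> f \<in> P \<Longrightarrow> 0 \<le> d e f"
  by (simp add: bipolar_metric_def)

lemma bipolar_metric_eq_0_iff:
  "bipolar_metric E P d \<Longrightarrow> e \<in> E \<Longrightarrow> f \<in> P \<Longrightarrow> d e f = 0 \<longleftrightarrow> e = f"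
  by (simp add: bipolar_metric_def)

lemma bipolar_metric_triangle:
  "bipolar_metric E P d \<Longrightarrow> e \<in> E \<Longrightarrow> r \<in> E \<Longrightarrow> z \<in> P \<Longrightarrow> f \<in> P \<Longrightarrow>
    d e f \<le> d e z + d r z + d r f"
  by (simp add: bipolar_metric_def)

lemma bipolar_limits_eq:
  assumes bm: "bipolar_metric E P d"
    and x: "conv_EP E P d x a" and y: "conv_PE E P d y b"
    and diag: "(\<lambda>n. d (x n) (y n)) \<longlonglongrightarrow> 0"
  shows "b = a"
proof -
  have xE: "x n \<in> E" and yP: "y n \<in> P" for n
    using x y by (auto simp: conv_EP_def conv_PE_def)
  have aP: "a \<in> P" and bE: "b \<in> E"
    using x y by (auto simp: conv_EP_def conv_PE_def)
  have "(\<lambda>n. d b (y n) + d (x n) (y n) + d (x n) a) \<longlonglongrightarrow> 0 + 0 + 0"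
    using x y diag by (intro tendsto_add) (auto simp: conv_EP_def conv_PE_def)
  moreover have "d b a \<le> d b (y n) + d (x n) (y n) + d (x n) a" for n
    using bipolar_metric_triangle[OF bm bE xE yP aP] .
  ultimately have "d b a \<le> 0"
    by (intro LIMSEQ_le_const[where a = "d b a"]) auto
  then show ?thesis
    using bipolar_metric_nonneg[OF bm bE aP] bipolar_metric_eq_0_iff[OF bm bE aP] by simp
qed

lemma cauchy_biseq_diagonal_tendsto_0:
  assumes bm: "bipolar_metric E P d" and cauchy: "cauchy_biseq E P d x y"
  shows "(\<lambda>n. d (x n) (y n)) \<longlonglongrightarrow> 0"
proof (rule LIMSEQ_I)
  fix \<epsilon> :: real
  assume "0 < \<epsilon>"
  then obtain N where "\<forall>n\<ge>N. \<forall>m\<ge>N. d (x n) (y m) < \<epsilon>"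
    using cauchy by (auto simp: cauchy_biseq_def)
  moreover have "0 \<le> d (x n) (y n)" for n
    using cauchy bipolar_metric_nonneg[OF bm] by (simp add: cauchy_biseq_def)
  ultimately show "\<exists>N. \<forall>n\<ge>N. norm (d (x n) (y n) - 0) < \<epsilon>"
    by auto
qed

lemma complete_bipolar_fixed_point:
  assumes complete: "complete_bipolar E P d" and cont: "bp_continuous E P d F"
    and cauchy: "cauchy_biseq E P d x (\<lambda>n. F (x n))"
  shows "\<exists>a\<in>P. F a = a"
proof -
  have bm: "bipolar_metric E P d"
    using complete by (simp add: complete_bipolar_def)
  obtain a where a: "conv_EP E P d x a"
    using complete cauchy by (auto simp: complete_bipolar_def convergent_biseq_def)
  then have "conv_PE E P d (\<lambda>n. F (x n)) (F a)"
    using cont by (simp add: bp_continuous_def)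
  then have "F a = a"
    using bipolar_limits_eq[OF bm a] cauchy_biseq_diagonal_tendsto_0[OF bm cauchy] by blast
  moreover have "a \<in> P"
    using a by (simp add: conv_EP_def)
  ultimately show ?thesis by blast
qed

lemma bipolar_telescoping_bound:
  assumes bm: "bipolar_metric E P d" and xE: "\<And>n. x n \<in> E" and yP: "\<And>n. y n \<in> P"
    and T: "decseq T" "T \<longlonglongrightarrow> 0"
    and diag: "\<And>n. d (x n) (y n) \<le> T (2*n) - T (2*n+1)"
    and subdiag: "\<And>n. d (x (Suc n)) (y n) \<le> T (2*n+1) - T (2*n+2)"
  shows "d (x n) (y m) \<le> T (min n m)"
proof -
  have T_nonneg: "0 \<le> T k" for k
    using decseq_ge[OF T] .
  have upper: "d (x n) (y m) \<le> T (2*n) - T (2*m+1)" if "n \<le> m" for n m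
    using that
  proof (induction m rule: dec_induct)
    case base
    then show ?case using diag by simp
  next
    case (step m)
    have "d (x n) (y (Suc m)) \<le> d (x n) (y m) + d (x (Suc m)) (y m) + d (x (Suc m)) (y (Suc m))"
      by (rule bipolar_metric_triangle[OF bm xE xE yP yP])
    then show ?case using step.IH diag[of "Suc m"] subdiag[of m] by simp
  qed
  have lower: "d (x n) (y m) \<le> T (2*m+1) - T (2*n)" if "Suc m \<le> n" for n m
    using that
  proof (induction n rule: dec_induct)
    case base
    then show ?case using subdiag[of m] by simp
  next
    case (step n)
    have "d (x (Suc n)) (y m) \<le> d (x (Suc n)) (y n) + d (x n) (y n) + d (x n) (y m)"
      by (rule bipolar_metric_triangle[OF bm xE xE yP yP])
    then show ?case using step.IH diag[of n] subdiag[of n] by simp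
  qed
  show ?thesis
  proof (cases "n \<le> m")
    case True
    then show ?thesis
      using upper[OF True] T_nonneg[of "2*m+1"] decseqD[OF T(1), of n "2*n"] by (simp add: min_def)
  next
    case False
    then show ?thesis
      using lower[of m n] T_nonneg[of "2*n"] decseqD[OF T(1), of m "2*m+1"] by (simp add: min_def)
  qed
qed

lemma cauchy_biseq_telescoping:
  assumes "bipolar_metric E P d" "\<And>n. x n \<in> E" "\<And>n. y n \<in> P" "decseq T" "T \<longlonglongrightarrow> 0"
    "\<And>n. d (x n) (y n) \<le> T (2*n) - T (2*n+1)"
    "\<And>n. d (x (Suc n)) (y n) \<le> T (2*n+1) - T (2*n+2)"
  shows "cauchy_biseq E P d x y"
proof -
  have "\<exists>N. \<forall>n\<ge>N. \<forall>m\<ge>N. d (x n) (y m) < \<epsilon>" if \<epsilon>: "0 < \<epsilon>" for \<epsilon> :: real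
  proof -
    obtain N where N: "\<And>k. N \<le> k \<Longrightarrow> T k < \<epsilon>"
      using order_tendstoD(2)[OF assms(5) \<epsilon>] by (auto simp: eventually_sequentially)
    show ?thesis
      using N bipolar_telescoping_bound[OF assms] by (meson le_less_trans min.boundedI)
  qed
  then show ?thesis
    using assms(2,3) by (simp add: cauchy_biseq_def)
qed

lemma cauchy_biseq_geometric:
  assumes bm: "bipolar_metric E P d" and xE: "\<And>n. x n \<in> E" and yP: "\<And>n. y n \<in> P"
    and r: "0 \<le> r" "r < 1"
    and diag: "\<And>n. d (x n) (y n) \<le> C * r ^ (2*n)"
    and subdiag: "\<And>n. d (x (Suc n)) (y n) \<le> C * r ^ (2*n+1)"
  shows "cauchy_biseq E P d x y"
proof -
  define T where "T k = C * r ^ k / (1 - r)" for k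
  have C: "0 \<le> C"
    using diag[of 0] bipolar_metric_nonneg[OF bm xE yP, of 0 0] by simp
  have step: "C * r ^ k = T k - T (Suc k)" for k
  proof -
    have "T k - T (Suc k) = C * r ^ k * (1 - r) / (1 - r)"
      by (simp add: T_def diff_divide_distrib algebra_simps)
    then show ?thesis using r by simp
  qed
  have "decseq T"
    unfolding decseq_def T_def using C r
    by (auto intro!: divide_right_mono mult_left_mono power_decreasing)
  moreover have "T \<longlonglongrightarrow> 0"
    unfolding T_def using r by (auto intro!: tendsto_eq_intros LIMSEQ_power_zero)
  ultimately show ?thesis
  proof (rule cauchy_biseq_telescoping[OF bm xE yP])
    show "d (x n) (y n) \<le> T (2*n) - T (2*n+1)" for n
      using diag[of n] step[of "2*n"] by simp
    show "d (x (Suc n)) (y n) \<le> T (2*n+1) - T (2*n+2)" for n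
      using subdiag[of n] step[of "2*n+1"] by simp
  qed
qed

definition dist_poly :: "nat \<Rightarrow> (nat \<Rightarrow> 'a \<Rightarrow> 'a \<Rightarrow> real) \<Rightarrow> ('a \<Rightarrow> 'a \<Rightarrow> real) \<Rightarrow> 'a \<Rightarrow> 'a \<Rightarrow> real"
  where "dist_poly \<sigma> q d e f = (\<Sum>u=0..\<sigma>. q u e f * d e f ^ u)"

locale polynomial_contraction =
  fixes E P :: "'a set" and d :: "'a \<Rightarrow> 'a \<Rightarrow> real" and F :: "'a \<Rightarrow> 'a"
    and \<pi> :: real and \<sigma> :: nat and q :: "nat \<Rightarrow> 'a \<Rightarrow> 'a \<Rightarrow> real"
    and \<rho> :: nat and Q :: real
  assumes bipolar: "bipolar_metric E P d"
    and contra: "contravariant E P F"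
    and pi: "0 \<le> \<pi>" "\<pi> < 1"
    and q_nonneg: "\<And>u e f. u \<le> \<sigma> \<Longrightarrow> e \<in> E \<Longrightarrow> f \<in> P \<Longrightarrow> 0 \<le> q u e f"
    and contraction: "\<And>e f. e \<in> E \<Longrightarrow> f \<in> P \<Longrightarrow>
      dist_poly \<sigma> q d (F f) (F e) \<le> \<pi> * dist_poly \<sigma> q d e f"
    and rho: "0 < \<rho>" "\<rho> \<le> \<sigma>"
    and Q_pos: "0 < Q"
    and qbound: "\<And>e f. e \<in> E \<Longrightarrow> f \<in> P \<Longrightarrow> Q \<le> q \<rho> e f"
begin

abbreviation S :: "'a \<Rightarrow> 'a \<Rightarrow> real" where "S \<equiv> dist_poly \<sigma> q d"

lemma map_E: "e \<in> E \<Longrightarrow> F e \<in> P" and map_P: "f \<in> P \<Longrightarrow> F f \<in> E"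
  using contra by (auto simp: contravariant_def)

lemma fixed_point_mem: "g \<in> E \<union> P \<Longrightarrow> F g = g \<Longrightarrow> g \<in> E \<and> g \<in> P"
  using map_E[of g] map_P[of g] by auto

lemma dist_poly_nonneg: "e \<in> E \<Longrightarrow> f \<in> P \<Longrightarrow> 0 \<le> S e f"
  unfolding dist_poly_def
  using q_nonneg bipolar_metric_nonneg[OF bipolar] by (intro sum_nonneg) auto

lemma power_le_dist_poly:
  assumes "e \<in> E" "f \<in> P"
  shows "Q * d e f ^ \<rho> \<le> S e f"
proof -
  have "Q * d e f ^ \<rho> \<le> q \<rho> e f * d e f ^ \<rho>"
    using qbound[OF assms] bipolar_metric_nonneg[OF bipolar assms] by (simp add: mult_right_mono)
  also have "\<dots> \<le> S e f"
    unfolding dist_poly_def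
    using rho q_nonneg bipolar_metric_nonneg[OF bipolar] assms
    by (intro member_le_sum[where f = "\<lambda>u. q u e f * d e f ^ u"]) auto
  finally show ?thesis .
qed

lemma dist_le_geometric:
  assumes ef: "e \<in> E" "f \<in> P" and S: "S e f \<le> \<pi> ^ k * s"
  shows "d e f \<le> root \<rho> (s / Q) * root \<rho> \<pi> ^ k"
proof -
  have "d e f ^ \<rho> \<le> \<pi> ^ k * s / Q"
    using power_le_dist_poly[OF ef] S Q_pos by (simp add: field_simps)
  then have "root \<rho> (d e f ^ \<rho>) \<le> root \<rho> (\<pi> ^ k * s / Q)"
    using rho by simp
  also have "root \<rho> (d e f ^ \<rho>) = d e f"
    using rho bipolar_metric_nonneg[OF bipolar ef] by (simp add: real_root_power_cancel)
  also have "root \<rho> (\<pi> ^ k * s / Q) = root \<rho> (\<pi> ^ k) * root \<rho> (s / Q)"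
    by (metis real_root_mult times_divide_eq_right)
  also have "\<dots> = root \<rho> (s / Q) * root \<rho> \<pi> ^ k"
    using rho by (simp add: real_root_power)
  finally show ?thesis .
qed

lemma orbit_mem:
  assumes "x 0 \<in> E" "\<And>n. x (Suc n) = F (F (x n))"
  shows "x n \<in> E"
  by (induction n) (use assms map_E map_P in auto)

lemma dist_poly_orbit_le:
  assumes x0: "x 0 \<in> E" and x: "\<And>n. x (Suc n) = F (F (x n))"
  shows "S (x n) (F (x n)) \<le> \<pi> ^ (2*n) * S (x 0) (F (x 0))"
    and "S (x (Suc n)) (F (x n)) \<le> \<pi> ^ (2*n+1) * S (x 0) (F (x 0))"
proof -
  have xE: "x n \<in> E" for n
    using orbit_mem[where x = x, OF x0 x] .
  have advance_x: "S (x (Suc n)) (F (x n)) \<le> \<pi> * S (x n) (F (x n))" for n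
    using contraction[OF xE map_E[OF xE]] by (simp only: x[symmetric])
  have advance_y: "S (x (Suc n)) (F (x (Suc n))) \<le> \<pi> * S (x (Suc n)) (F (x n))" for n
    using contraction[OF xE[of "Suc n"] map_E[OF xE[of n]]] by (simp only: x[symmetric])
  show diag: "S (x n) (F (x n)) \<le> \<pi> ^ (2*n) * S (x 0) (F (x 0))" for n
  proof (induction n)
    case 0
    then show ?case by simp
  next
    case (Suc n)
    have "S (x (Suc n)) (F (x (Suc n))) \<le> \<pi> * S (x (Suc n)) (F (x n))"
      by (rule advance_y)
    also have "\<dots> \<le> \<pi> * (\<pi> * S (x n) (F (x n)))"
      using advance_x pi by (intro mult_left_mono)
    also have "\<dots> \<le> \<pi> * (\<pi> * (\<pi> ^ (2*n) * S (x 0) (F (x 0))))"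
      using Suc.IH pi by (intro mult_left_mono) auto
    finally show ?case by (simp add: ac_simps)
  qed
  show "S (x (Suc n)) (F (x n)) \<le> \<pi> ^ (2*n+1) * S (x 0) (F (x 0))"
    using advance_x[of n] mult_left_mono[OF diag[of n] pi(1)] by (simp add: ac_simps)
qed

lemma orbit_cauchy_biseq:
  assumes x0: "x 0 \<in> E" and x: "\<And>n. x (Suc n) = F (F (x n))"
  shows "cauchy_biseq E P d x (\<lambda>n. F (x n))"
proof (rule cauchy_biseq_geometric[OF bipolar])
  show xE: "x n \<in> E" and "F (x n) \<in> P" for n
    using orbit_mem[where x = x, OF x0 x] map_E[OF orbit_mem[where x = x, OF x0 x]] .
  show "0 \<le> root \<rho> \<pi>" and "root \<rho> \<pi> < 1"
    using pi rho by (auto intro: real_root_ge_zero)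
  show "d (x n) (F (x n)) \<le> root \<rho> (S (x 0) (F (x 0)) / Q) * root \<rho> \<pi> ^ (2*n)" for n
    using dist_le_geometric[OF xE map_E[OF xE] dist_poly_orbit_le(1)[where x = x, OF x0 x]] .
  show "d (x (Suc n)) (F (x n)) \<le> root \<rho> (S (x 0) (F (x 0)) / Q) * root \<rho> \<pi> ^ (2*n+1)" for n
    using dist_le_geometric[OF xE map_E[OF xE] dist_poly_orbit_le(2)[where x = x, OF x0 x]] .
qed

lemma fixed_point_unique:
  assumes "g \<in> E \<union> P" "F g = g" "h \<in> E \<union> P" "F h = h"
  shows "g = h"
proof -
  have g: "g \<in> E" "g \<in> P" and h: "h \<in> E" "h \<in> P"
    using fixed_point_mem assms by auto
  have "S g h \<le> \<pi> * S h g"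
    using contraction[OF h(1) g(2)] assms by simp
  also have "\<dots> \<le> \<pi> * (\<pi> * S g h)"
    using contraction[OF g(1) h(2)] assms pi by (simp add: mult_left_mono)
  finally have "(1 - \<pi> * \<pi>) * S g h \<le> 0"
    by (simp add: algebra_simps)
  moreover have "0 < 1 - \<pi> * \<pi>"
    using pi mult_strict_mono[of \<pi> 1 \<pi> 1] by simp
  ultimately have "S g h \<le> 0"
    by (simp add: mult_le_0_iff)
  then have "Q * d g h ^ \<rho> \<le> 0"
    using power_le_dist_poly[OF g(1) h(2)] by linarith
  then have "d g h ^ \<rho> \<le> 0"
    using Q_pos by (simp add: mult_le_0_iff)
  then have "\<not> 0 < d g h"
    by (meson not_le zero_less_power)
  then have "d g h = 0"
    using bipolar_metric_nonneg[OF bipolar g(1) h(2)] by simp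
  then show ?thesis
    using bipolar_metric_eq_0_iff[OF bipolar g(1) h(2)] by simp
qed

end

theorem theorem3p3:
  fixes E P :: "'a set" and d :: "'a \<Rightarrow> 'a \<Rightarrow> real" and F :: "'a \<Rightarrow> 'a"
    and \<pi> :: real and \<sigma> :: nat and q :: "nat \<Rightarrow> 'a \<Rightarrow> 'a \<Rightarrow> real"
    and \<rho> :: nat and Q :: real
  assumes complete: "complete_bipolar E P d"
    and contra: "contravariant E P F"
    and pi: "0 < \<pi>" "\<pi> < 1"
    and sigma: "\<sigma> \<ge> 1"
    and q_nonneg: "\<And>u e f. u \<le> \<sigma> \<Longrightarrow> e \<in> E \<Longrightarrow> f \<in> P \<Longrightarrow> q u e f \<ge> 0"
    and contraction: "\<And>e f. e \<in> E \<Longrightarrow> f \<in> P \<Longrightarrow>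
       (\<Sum>u=0..\<sigma>. q u (F f) (F e) * d (F f) (F e) ^ u)
         \<le> \<pi> * (\<Sum>u=0..\<sigma>. q u e f * d e f ^ u)"
    and cont: "bp_continuous E P d F"
    and rho: "1 \<le> \<rho>" "\<rho> \<le> \<sigma>"
    and Qpos: "Q > 0"
    and qbound: "\<And>e f. e \<in> E \<Longrightarrow> f \<in> P \<Longrightarrow> q \<rho> e f \<ge> Q"
  shows "\<exists>!g. g \<in> E \<union> P \<and> F g = g"
proof -
  interpret polynomial_contraction E P d F \<pi> \<sigma> q \<rho> Q
    using complete contra pi q_nonneg contraction rho Qpos qbound
    by unfold_locales (auto simp: complete_bipolar_def dist_poly_def)
  obtain x0 where x0: "x0 \<in> E"
    using bipolar by (auto simp: bipolar_metric_def)
  define x where "x n = ((F \<circ> F) ^^ n) x0" for n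
  have "x 0 \<in> E"
    using x0 by (simp add: x_def)
  moreover have "x (Suc n) = F (F (x n))" for n
    by (simp add: x_def)
  ultimately have "cauchy_biseq E P d x (\<lambda>n. F (x n))"
    by (rule orbit_cauchy_biseq)
  then obtain a where a: "a \<in> P" "F a = a"
    using complete_bipolar_fixed_point[OF complete cont, of x] by blast
  show ?thesis
  proof (rule ex1I)
    show "a \<in> E \<union> P \<and> F a = a"
      using a by simp
    show "h = a" if "h \<in> E \<union> P \<and> F h = h" for h
      using that a by (auto intro: fixed_point_unique[of h a])
  qed
qed

end
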